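(* Let $h$ be a positive integer and $L$ an $h$-modular lattice with zero. Let $x$ be a map from $\mathrm{J}(K)$ to $L$ with finite range. Then $x\in\mathcal{A}^*$ if and only if $x$ extends to a homomorphism from $\langle K^-,\vee\rangle$ to $\langle L,\wedge\rangle$, where $K^-=K\setminus\{0_K\}$. Furthermore, such an extension is unique.
   Context: $K$ is the lattice consisting of $\varnothing$ (its zero $0_K$), $C=\{c\}$, $A_m=\{a_k:k\geq m\}$, $B_n=\{b_k:k\geq n\}$ ($m,n<\omega$), and $C\cup A_m\cup B_n$ with $|m-n|\leq1$, ordered by inclusion; $a_n,b_n,c$ denote $A_n,B_n,C$, so $\mathrm{J}(K)=\{c\}\cup\{a_n\}\cup\{b_n\}$. $\mathcal{A}$ is the set of antitone maps $x\colon\mathrm{J}(K)\to L$ ($p\leq q\Rightarrow x(p)\geq x(q)$) with finite range. For $x\in\mathcal{A}$, $x(a_\infty)$, $x(b_\infty)$ are the eventual values of the increasing sequences $(x(a_n))$, $(x(b_n))$. The map $x^{(1)}$ is defined by $x^{(1)}(c)=x(c)\vee(x(a_\infty)\wedge x(b_\infty))$, $x^{(1)}(a_0)=x(a_0)$, $x^{(1)}(b_0)=x(b_0)$, $x^{(1)}(a_{n+1})=x(a_{n+1})\vee(x(b_n)\wedge x(c))$, $x^{(1)}(b_{n+1})=x(b_{n+1})\vee(x(a_n)\wedge x(c))$ for $n<\omega$. $\mathcal{A}^*=\{x\in\mathcal{A}:x^{(1)}=x\}$. $L$ is $h$-modular if $u^{(h+1)}=u^{(h)}$ for all $u\in L^3$,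 where $\langle x,y,z\rangle^{(1)}=\langle x\vee(y\wedge z),y\vee(x\wedge z),z\vee(x\wedge y)\rangle$ and $u^{(k+1)}=(u^{(k)})^{(1)}$. *)

theory Defs
  imports Main
begin

text \<open>Points of the underlying set of the lattice K: c, a_k, b_k.\<close>
datatype pt = PC | PA nat | PB nat

definition Cset :: "pt set" where "Cset = {PC}"
definition Aset :: "nat \<Rightarrow> pt set" where "Aset m = {PA k | k. m \<le> k}"
definition Bset :: "nat \<Rightarrow> pt set" where "Bset n = {PB k | k. n \<le> k}"

definition Klat :: "pt set set" where
  "Klat = {{}, Cset} \<union> range Aset \<union> range Bset
     \<union> {Cset \<union> Aset m \<union> Bset n | m n. m \<le> n + 1 \<and> n \<le> m + 1}"

definition Kminus :: "pt set set" where "Kminus = Klat - {{}}"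
definition JK :: "pt set set" where "JK = {Cset} \<union> range Aset \<union> range Bset"

definition Kjoin :: "pt set \<Rightarrow> pt set \<Rightarrow> pt set" where
  "Kjoin p q = (THE r. r \<in> Klat \<and> p \<union> q \<subseteq> r \<and> (\<forall>s\<in>Klat. p \<union> q \<subseteq> s \<longrightarrow> r \<subseteq> s))"

text \<open>The set \<A>: antitone maps J(K) -> L with finite range (maps considered on JK only).\<close>
definition inA :: "(pt set \<Rightarrow> 'a::order) \<Rightarrow> bool" where
  "inA x \<longleftrightarrow> (\<forall>p\<in>JK. \<forall>q\<in>JK. p \<subseteq> q \<longrightarrow> x q \<le> x p) \<and> finite (x ` JK)"

definition eventual :: "(nat \<Rightarrow> 'a) \<Rightarrow> 'a" where
  "eventual f = (THE v. \<exists>N. \<forall>n\<ge>N. f n = v)"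

definition xainf :: "(pt set \<Rightarrow> 'a) \<Rightarrow> 'a" where
  "xainf x = eventual (\<lambda>n. x (Aset n))"
definition xbinf :: "(pt set \<Rightarrow> 'a) \<Rightarrow> 'a" where
  "xbinf x = eventual (\<lambda>n. x (Bset n))"

definition x1_c :: "(pt set \<Rightarrow> 'a::lattice) \<Rightarrow> 'a" where
  "x1_c x = sup (x Cset) (inf (xainf x) (xbinf x))"
definition x1_a :: "(pt set \<Rightarrow> 'a::lattice) \<Rightarrow> nat \<Rightarrow> 'a" where
  "x1_a x n = (case n of 0 \<Rightarrow> x (Aset 0)
                 | Suc m \<Rightarrow> sup (x (Aset (Suc m))) (inf (x (Bset m)) (x Cset)))"
definition x1_b :: "(pt set \<Rightarrow> 'a::lattice) \<Rightarrow> nat \<Rightarrow> 'a" where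
  "x1_b x n = (case n of 0 \<Rightarrow> x (Bset 0)
                 | Suc m \<Rightarrow> sup (x (Bset (Suc m))) (inf (x (Aset m)) (x Cset)))"

definition inAstar :: "(pt set \<Rightarrow> 'a::lattice) \<Rightarrow> bool" where
  "inAstar x \<longleftrightarrow> inA x \<and> x1_c x = x Cset
     \<and> (\<forall>n. x1_a x n = x (Aset n)) \<and> (\<forall>n. x1_b x n = x (Bset n))"

definition tri_step :: "'a::lattice \<times> 'a \<times> 'a \<Rightarrow> 'a \<times> 'a \<times> 'a" where
  "tri_step u = (case u of (x, y, z) \<Rightarrow>
      (sup x (inf y z), sup y (inf x z), sup z (inf x y)))"

definition h_modular :: "nat \<Rightarrow> 'a::lattice itself \<Rightarrow> bool" where
  "h_modular h _ \<longleftrightarrow> (\<forall>u :: 'a \<times> 'a \<times> 'a. (tri_step ^^ (h + 1)) u = (tri_step ^^ h) u)"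

definition hom_ext :: "(pt set \<Rightarrow> 'a::lattice) \<Rightarrow> (pt set \<Rightarrow> 'a) \<Rightarrow> bool" where
  "hom_ext x f \<longleftrightarrow> (\<forall>p\<in>Kminus. \<forall>q\<in>Kminus. f (Kjoin p q) = inf (f p) (f q))
      \<and> (\<forall>p\<in>JK. f p = x p)"

end

theory Submission
  imports Defs
begin

(*
  The element C u A_m u B_n of K^- (|m - n| <= 1) is the join a_m v b_n in K, so a
  join-to-meet homomorphism extending x must send it to x(a_m) /\ x(b_n): this gives
  uniqueness and the only candidate extension Kext x.  Since c <= a_m v b_n,
  a_(n+1) <= b_n v c and b_(n+1) <= a_n v c, a homomorphism forces the three inequalities
  of Astar_ineqs, and for antitone x of finite range these say exactly x^(1) = x, because
  the eventual values x(a_inf), x(b_inf) are attained.  Conversely, the same inequalities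
  let Kext x turn each of the finitely many shapes of joins in K into meets.
*)

definition CABset :: "nat \<Rightarrow> nat \<Rightarrow> pt set" where
  "CABset m n = Cset \<union> Aset m \<union> Bset n"

lemma mem_Kset_iff [simp]:
  "PC \<in> Cset" "PA k \<notin> Cset" "PB k \<notin> Cset"
  "PC \<notin> Aset m" "PA k \<in> Aset m \<longleftrightarrow> m \<le> k" "PB k \<notin> Aset m"
  "PC \<notin> Bset m" "PB k \<in> Bset m \<longleftrightarrow> m \<le> k" "PA k \<notin> Bset m"
  "PC \<in> CABset m n" "PA k \<in> CABset m n \<longleftrightarrow> m \<le> k" "PB k \<in> CABset m n \<longleftrightarrow> n \<le> k"
  by (auto simp: Cset_def Aset_def Bset_def CABset_def)

lemma subset_Kset_iff [simp]:
  "\<not> Cset \<subseteq> Aset m" "\<not> Cset \<subseteq> Bset m" "Cset \<subseteq> CABset m n" "\<not> Cset \<subseteq> {}"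
  "\<not> Aset k \<subseteq> Cset" "Aset k \<subseteq> Aset m \<longleftrightarrow> m \<le> k" "\<not> Aset k \<subseteq> Bset m"
  "Aset k \<subseteq> CABset m n \<longleftrightarrow> m \<le> k" "\<not> Aset k \<subseteq> {}"
  "\<not> Bset k \<subseteq> Cset" "Bset k \<subseteq> Bset m \<longleftrightarrow> m \<le> k" "\<not> Bset k \<subseteq> Aset m"
  "Bset k \<subseteq> CABset m n \<longleftrightarrow> n \<le> k" "\<not> Bset k \<subseteq> {}"
  "\<not> CABset k l \<subseteq> Cset" "\<not> CABset k l \<subseteq> Aset m" "\<not> CABset k l \<subseteq> Bset m"
  "CABset k l \<subseteq> CABset m n \<longleftrightarrow> m \<le> k \<and> n \<le> l" "\<not> CABset k l \<subseteq> {}"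
  by (auto simp: Cset_def Aset_def Bset_def CABset_def subset_iff)

lemma union_Kset_eq:
  "Aset m \<union> Aset k = Aset (min m k)" "Bset m \<union> Bset k = Bset (min m k)"
  "CABset m n \<union> CABset k l = CABset (min m k) (min n l)"
  by (auto simp: Aset_def Bset_def CABset_def Un_ac)

lemma Kset_nonempty [simp]:
  "Cset \<noteq> {}" "Aset m \<noteq> {}" "Bset m \<noteq> {}" "CABset m n \<noteq> {}"
  by (auto simp: Cset_def Aset_def Bset_def CABset_def)

lemma CABset_notin_JK: "CABset m n \<notin> JK"
  unfolding JK_def by (auto dest: arg_cong[where f = "\<lambda>s. PC \<in> s \<and> PA m \<in> s \<and> PB n \<in> s"])

lemma Klat_cases [consumes 1, case_names empty C A B CAB]:
  assumes "p \<in> Klat"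
  obtains "p = {}" | "p = Cset" | m where "p = Aset m" | n where "p = Bset n"
    | m n where "p = CABset m n" "m \<le> Suc n" "n \<le> Suc m"
  using assms unfolding Klat_def CABset_def by auto

lemma Kminus_cases [consumes 1, case_names C A B CAB]:
  assumes "p \<in> Kminus"
  obtains "p = Cset" | m where "p = Aset m" | n where "p = Bset n"
    | m n where "p = CABset m n" "m \<le> Suc n" "n \<le> Suc m"
  using assms unfolding Kminus_def by (blast elim: Klat_cases)

lemma in_Kminus [simp]:
  "Cset \<in> Kminus" "Aset m \<in> Kminus" "Bset m \<in> Kminus"
  "m \<le> Suc n \<Longrightarrow> n \<le> Suc m \<Longrightarrow> CABset m n \<in> Kminus"
  unfolding Kminus_def Klat_def CABset_def by auto

lemma in_Klat [simp]:
  "Cset \<in> Klat" "Aset m \<in> Klat" "Bset m \<in> Klat"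
  "m \<le> Suc n \<Longrightarrow> n \<le> Suc m \<Longrightarrow> CABset m n \<in> Klat"
  using in_Kminus unfolding Kminus_def by blast+

lemma in_JK [simp]: "Cset \<in> JK" "Aset m \<in> JK" "Bset m \<in> JK"
  unfolding JK_def by auto

lemma JK_subset_Kminus: "JK \<subseteq> Kminus"
  unfolding JK_def by auto

lemma Kjoin_eqI:
  assumes "r \<in> Klat" "p \<union> q \<subseteq> r" "\<And>s. s \<in> Klat \<Longrightarrow> p \<union> q \<subseteq> s \<Longrightarrow> r \<subseteq> s"
  shows "Kjoin p q = r"
  unfolding Kjoin_def using assms by (intro the_equality) blast+

lemma Kjoin_commute: "Kjoin p q = Kjoin q p"
  unfolding Kjoin_def by (simp add: Un_commute)

lemma Kjoin_union: "p \<union> q \<in> Klat \<Longrightarrow> Kjoin p q = p \<union> q"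
  by (rule Kjoin_eqI) auto

lemma Kjoin_absorb: "p \<subseteq> q \<Longrightarrow> q \<in> Klat \<Longrightarrow> Kjoin p q = q"
  using Kjoin_union[of p q] by (simp add: Un_absorb1)

lemma Kjoin_eq_CABset:
  assumes "m \<le> Suc n" "n \<le> Suc m" "p \<union> q \<subseteq> CABset m n"
    and "\<And>k l. k \<le> Suc l \<Longrightarrow> l \<le> Suc k \<Longrightarrow> p \<union> q \<subseteq> CABset k l \<Longrightarrow> k \<le> m \<and> l \<le> n"
    and "\<not> p \<union> q \<subseteq> Cset" "\<And>k. \<not> p \<union> q \<subseteq> Aset k" "\<And>k. \<not> p \<union> q \<subseteq> Bset k"
  shows "Kjoin p q = CABset m n"
proof (rule Kjoin_eqI)
  show "CABset m n \<in> Klat" using assms(1,2) by simp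
  fix s assume "s \<in> Klat" "p \<union> q \<subseteq> s"
  then show "CABset m n \<subseteq> s"
    using assms by (cases rule: Klat_cases) auto
qed fact

lemma Kjoin_Cset_Aset: "Kjoin Cset (Aset m) = CABset m (Suc m)"
  by (rule Kjoin_eq_CABset) auto

lemma Kjoin_Cset_Bset: "Kjoin Cset (Bset n) = CABset (Suc n) n"
  by (rule Kjoin_eq_CABset) auto

lemma Kjoin_Aset_Bset: "Kjoin (Aset m) (Bset n) = CABset (min m (Suc n)) (min n (Suc m))"
  by (rule Kjoin_eq_CABset) auto

lemma Kjoin_Aset_CABset:
  "m \<le> Suc n \<Longrightarrow> n \<le> Suc m \<Longrightarrow> Kjoin (Aset k) (CABset m n) = Kjoin (Aset (min k m)) (Bset n)"
  unfolding Kjoin_Aset_Bset by (rule Kjoin_eq_CABset) auto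

lemma Kjoin_Bset_CABset:
  "m \<le> Suc n \<Longrightarrow> n \<le> Suc m \<Longrightarrow> Kjoin (Bset k) (CABset m n) = Kjoin (Aset m) (Bset (min k n))"
  unfolding Kjoin_Aset_Bset by (rule Kjoin_eq_CABset) auto

lemma Kjoin_union_eq:
  "Kjoin Cset Cset = Cset"
  "Kjoin (Aset m) (Aset k) = Aset (min m k)"
  "Kjoin (Bset m) (Bset k) = Bset (min m k)"
  "m \<le> Suc n \<Longrightarrow> n \<le> Suc m \<Longrightarrow> Kjoin Cset (CABset m n) = CABset m n"
  "m \<le> Suc n \<Longrightarrow> n \<le> Suc m \<Longrightarrow> m' \<le> Suc n' \<Longrightarrow> n' \<le> Suc m' \<Longrightarrow>
     Kjoin (CABset m n) (CABset m' n') = CABset (min m m') (min n n')"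
  by (simp_all add: Kjoin_union Kjoin_absorb union_Kset_eq)

lemma eventual_eqI:
  assumes "\<And>n. N \<le> n \<Longrightarrow> g n = v"
  shows "eventual g = v"
  unfolding eventual_def
proof (rule the_equality)
  fix w assume "\<exists>N'. \<forall>n\<ge>N'. g n = w"
  then obtain N' where "\<forall>n\<ge>N'. g n = w" by blast
  then show "w = v" using assms[of "max N N'"] by simp
qed (use assms in blast)

lemma mono_finite_range_eventual:
  fixes g :: "nat \<Rightarrow> 'a::order"
  assumes "mono g" "finite (range g)"
  obtains N where "\<And>n. N \<le> n \<Longrightarrow> g n = eventual g" "\<And>n. g n \<le> eventual g"
proof -
  obtain N where max: "\<And>b. b \<in> range g \<Longrightarrow> g N \<le> b \<Longrightarrow> g N = b"
    using finite_has_maximal[OF assms(2)] by blast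
  have stable: "g n = g N" if "N \<le> n" for n
    using max[of "g n"] monoD[OF assms(1) that] by (metis rangeI)
  then have limit: "eventual g = g N" by (rule eventual_eqI)
  have "g n \<le> eventual g" for n
  proof -
    have "g n \<le> g (max n N)" using assms(1) by (rule monoD) simp
    also have "\<dots> = eventual g" using stable[of "max n N"] limit by simp
    finally show ?thesis .
  qed
  with that stable limit show thesis by metis
qed

lemma inf_eventual_le_iff:
  fixes f g :: "nat \<Rightarrow> 'a::lattice"
  assumes "mono f" "finite (range f)" "mono g" "finite (range g)"
  shows "inf (eventual f) (eventual g) \<le> c \<longleftrightarrow> (\<forall>m n. inf (f m) (g n) \<le> c)"
proof -
  obtain M where M: "\<And>n. M \<le> n \<Longrightarrow> f n = eventual f" "\<And>n. f n \<le> eventual f"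
    using mono_finite_range_eventual[OF assms(1,2)] by blast
  obtain N where N: "\<And>n. N \<le> n \<Longrightarrow> g n = eventual g" "\<And>n. g n \<le> eventual g"
    using mono_finite_range_eventual[OF assms(3,4)] by blast
  have attained: "inf (eventual f) (eventual g) = inf (f M) (g N)"
    using M(1)[of M] N(1)[of N] by simp
  have upper: "inf (f m) (g n) \<le> inf (eventual f) (eventual g)" for m n
    using M(2) N(2) by (rule inf_mono)
  show ?thesis
    using attained upper order_trans by metis
qed

lemma inA_iff:
  "inA x \<longleftrightarrow> mono (\<lambda>n. x (Aset n)) \<and> mono (\<lambda>n. x (Bset n)) \<and> finite (x ` JK)"
  unfolding inA_def JK_def mono_def by (simp add: ball_Un) blast

definition Astar_ineqs :: "(pt set \<Rightarrow> 'a::lattice) \<Rightarrow> bool" where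
  "Astar_ineqs x \<longleftrightarrow> (\<forall>m n. inf (x (Aset m)) (x (Bset n)) \<le> x Cset)
     \<and> (\<forall>n. inf (x (Bset n)) (x Cset) \<le> x (Aset (Suc n)))
     \<and> (\<forall>n. inf (x (Aset n)) (x Cset) \<le> x (Bset (Suc n)))"

lemma inAstar_iff: "inAstar x \<longleftrightarrow> inA x \<and> Astar_ineqs x"
proof (cases "inA x")
  case True
  then have mono: "mono (\<lambda>n. x (Aset n))" "mono (\<lambda>n. x (Bset n))"
    and fin: "finite (range (\<lambda>n. x (Aset n)))" "finite (range (\<lambda>n. x (Bset n)))"
    unfolding inA_iff by (auto intro: finite_subset[of _ "x ` JK"] simp: JK_def)
  have "x1_c x = x Cset \<longleftrightarrow> (\<forall>m n. inf (x (Aset m)) (x (Bset n)) \<le> x Cset)"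
    unfolding x1_c_def xainf_def xbinf_def sup.absorb_iff1[symmetric]
    using inf_eventual_le_iff[OF mono(1) fin(1) mono(2) fin(2)] .
  moreover have "(\<forall>n. x1_a x n = x (Aset n)) \<longleftrightarrow> (\<forall>n. inf (x (Bset n)) (x Cset) \<le> x (Aset (Suc n)))"
    by (auto simp: x1_a_def sup.absorb_iff1[symmetric] split: nat.split)
  moreover have "(\<forall>n. x1_b x n = x (Bset n)) \<longleftrightarrow> (\<forall>n. inf (x (Aset n)) (x Cset) \<le> x (Bset (Suc n)))"
    by (auto simp: x1_b_def sup.absorb_iff1[symmetric] split: nat.split)
  ultimately show ?thesis
    unfolding inAstar_def Astar_ineqs_def by blast
qed (simp add: inAstar_def)

definition Kext :: "(pt set \<Rightarrow> 'a::lattice) \<Rightarrow> pt set \<Rightarrow> 'a" where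
  "Kext x p = (if p \<in> JK then x p
     else inf (x (Aset (LEAST k. PA k \<in> p))) (x (Bset (LEAST k. PB k \<in> p))))"

lemma Kext_simps [simp]:
  "Kext x Cset = x Cset" "Kext x (Aset m) = x (Aset m)" "Kext x (Bset m) = x (Bset m)"
  "Kext x (CABset m n) = inf (x (Aset m)) (x (Bset n))"
proof -
  have "(LEAST k. PA k \<in> CABset m n) = m" "(LEAST k. PB k \<in> CABset m n) = n"
    by (auto intro: Least_equality)
  then show "Kext x (CABset m n) = inf (x (Aset m)) (x (Bset n))"
    unfolding Kext_def using CABset_notin_JK by simp
qed (simp_all add: Kext_def)

context
  fixes x :: "pt set \<Rightarrow> 'a::lattice"
  assumes mono_A: "mono (\<lambda>n. x (Aset n))"
    and mono_B: "mono (\<lambda>n. x (Bset n))"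
    and ineqs: "Astar_ineqs x"
begin

lemma inf_Aset_Bset_le_Cset: "inf (x (Aset m)) (x (Bset n)) \<le> x Cset"
  using ineqs unfolding Astar_ineqs_def by blast

lemma inf_Bset_Cset_le_Aset: "inf (x (Bset n)) (x Cset) \<le> x (Aset (Suc n))"
  using ineqs unfolding Astar_ineqs_def by blast

lemma inf_Aset_Cset_le_Bset: "inf (x (Aset n)) (x Cset) \<le> x (Bset (Suc n))"
  using ineqs unfolding Astar_ineqs_def by blast

lemma inf_Aset_Bset_collapse_A:
  assumes "Suc n \<le> k"
  shows "inf (x (Aset k)) (x (Bset n)) = inf (x (Aset (Suc n))) (x (Bset n))"
proof (rule antisym)
  have "inf (x (Aset k)) (x (Bset n)) \<le> inf (x (Bset n)) (x Cset)"
    using inf_Aset_Bset_le_Cset[of k n] by simp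
  also have "\<dots> \<le> x (Aset (Suc n))"
    by (rule inf_Bset_Cset_le_Aset)
  finally show "inf (x (Aset k)) (x (Bset n)) \<le> inf (x (Aset (Suc n))) (x (Bset n))"
    by simp
  show "inf (x (Aset (Suc n))) (x (Bset n)) \<le> inf (x (Aset k)) (x (Bset n))"
    using monoD[OF mono_A assms] by (rule inf_mono) simp
qed

lemma inf_Aset_Bset_collapse_B:
  assumes "Suc m \<le> k"
  shows "inf (x (Aset m)) (x (Bset k)) = inf (x (Aset m)) (x (Bset (Suc m)))"
proof (rule antisym)
  have "inf (x (Aset m)) (x (Bset k)) \<le> inf (x (Aset m)) (x Cset)"
    using inf_Aset_Bset_le_Cset[of m k] by simp
  also have "\<dots> \<le> x (Bset (Suc m))"
    by (rule inf_Aset_Cset_le_Bset)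
  finally show "inf (x (Aset m)) (x (Bset k)) \<le> inf (x (Aset m)) (x (Bset (Suc m)))"
    by simp
  show "inf (x (Aset m)) (x (Bset (Suc m))) \<le> inf (x (Aset m)) (x (Bset k))"
    using monoD[OF mono_B assms] by (rule inf_mono[OF order_refl])
qed

lemma Kext_Kjoin_Aset_Bset: "Kext x (Kjoin (Aset m) (Bset n)) = inf (x (Aset m)) (x (Bset n))"
proof -
  consider "m \<le> Suc n" "n \<le> Suc m" | "Suc (Suc n) \<le> m" | "Suc (Suc m) \<le> n"
    by linarith
  then show ?thesis
  proof cases
    case 1
    then have "min m (Suc n) = m" "min n (Suc m) = n" by simp_all
    then show ?thesis unfolding Kjoin_Aset_Bset by simp
  next
    case 2
    then have "min m (Suc n) = Suc n" "min n (Suc m) = n" by simp_all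
    then show ?thesis unfolding Kjoin_Aset_Bset using inf_Aset_Bset_collapse_A[of n m] 2 by simp
  next
    case 3
    then have "min m (Suc n) = m" "min n (Suc m) = Suc m" by simp_all
    then show ?thesis unfolding Kjoin_Aset_Bset using inf_Aset_Bset_collapse_B[of m n] 3 by simp
  qed
qed

lemma inf_Aset_Aset: "inf (x (Aset m)) (x (Aset k)) = x (Aset (min m k))"
  using monoD[OF mono_A, of m k] monoD[OF mono_A, of k m]
  by (cases "m \<le> k") (simp_all add: inf_absorb1 inf_absorb2 min_def)

lemma inf_Bset_Bset: "inf (x (Bset m)) (x (Bset k)) = x (Bset (min m k))"
  using monoD[OF mono_B, of m k] monoD[OF mono_B, of k m]
  by (cases "m \<le> k") (simp_all add: inf_absorb1 inf_absorb2 min_def)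

lemma inf_Aset_Cset: "inf (x (Aset m)) (x Cset) = inf (x (Aset m)) (x (Bset (Suc m)))"
  using inf_Aset_Cset_le_Bset[of m] inf_Aset_Bset_le_Cset[of m "Suc m"]
  by (intro antisym) simp_all

lemma inf_Bset_Cset: "inf (x (Bset n)) (x Cset) = inf (x (Aset (Suc n))) (x (Bset n))"
  using inf_Bset_Cset_le_Aset[of n] inf_Aset_Bset_le_Cset[of "Suc n" n]
  by (intro antisym) simp_all

lemma Kext_Kjoin:
  assumes "p \<in> Kminus" "q \<in> Kminus"
  shows "Kext x (Kjoin p q) = inf (Kext x p) (Kext x q)"
proof -
  let ?hom = "\<lambda>p q. Kext x (Kjoin p q) = inf (Kext x p) (Kext x q)"
  have sym: "?hom q p" if "?hom p q" for p q
    using that by (simp add: Kjoin_commute inf_commute)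
  have AB: "?hom (Aset m) (Bset n)" for m n
    by (simp add: Kext_Kjoin_Aset_Bset)
  have CC: "?hom Cset Cset"
    by (simp add: Kjoin_union_eq)
  have CA: "?hom Cset (Aset m)" for m
    by (simp add: Kjoin_Cset_Aset inf_commute[of "x Cset"] inf_Aset_Cset)
  have CB: "?hom Cset (Bset n)" for n
    by (simp add: Kjoin_Cset_Bset inf_commute[of "x Cset"] inf_Bset_Cset)
  have CX: "?hom Cset (CABset m n)" if "m \<le> Suc n" "n \<le> Suc m" for m n
    using that inf_Aset_Bset_le_Cset by (simp add: Kjoin_union_eq inf_absorb2)
  have AA: "?hom (Aset m) (Aset k)" for m k
    by (simp add: Kjoin_union_eq inf_Aset_Aset)
  have BB: "?hom (Bset m) (Bset k)" for m k
    by (simp add: Kjoin_union_eq inf_Bset_Bset)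
  have AX: "?hom (Aset k) (CABset m n)" if "m \<le> Suc n" "n \<le> Suc m" for k m n
    using that by (simp add: Kjoin_Aset_CABset AB inf_Aset_Aset flip: inf_assoc)
  have BX: "?hom (Bset k) (CABset m n)" if "m \<le> Suc n" "n \<le> Suc m" for k m n
    using that by (simp add: Kjoin_Bset_CABset AB inf_Bset_Bset inf_left_commute[of "x (Bset k)"])
  have XX: "?hom (CABset m n) (CABset m' n')"
    if "m \<le> Suc n" "n \<le> Suc m" "m' \<le> Suc n'" "n' \<le> Suc m'" for m n m' n'
    using that by (simp add: Kjoin_union_eq flip: inf_Aset_Aset inf_Bset_Bset) (simp add: inf_aci)
  from assms show ?thesis
    by (elim Kminus_cases) (simp_all only: CC CA CB CX AA BB AB AX BX XX
        sym[OF CA] sym[OF CB] sym[OF CX] sym[OF AB] sym[OF AX] sym[OF BX])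
qed

lemma hom_ext_Kext: "hom_ext x (Kext x)"
  unfolding hom_ext_def using Kext_Kjoin by (auto simp: JK_def)

end

lemma hom_ext_antitone:
  assumes "hom_ext x f" "p \<in> Kminus" "q \<in> Kminus" "p \<subseteq> q"
  shows "f q \<le> f p"
proof -
  have "f q = f (Kjoin p q)"
    using assms(3,4) by (simp add: Kjoin_absorb Kminus_def)
  also have "\<dots> = inf (f p) (f q)"
    using assms(1-3) unfolding hom_ext_def by blast
  finally show ?thesis
    by (metis inf.cobounded1)
qed

lemma hom_ext_inf_le:
  assumes "hom_ext x f" "p \<in> JK" "q \<in> JK" "r \<in> JK"
    and "Kjoin p q \<in> Kminus" "r \<subseteq> Kjoin p q"
  shows "inf (x p) (x q) \<le> x r"
proof -
  have agree: "f s = x s" if "s \<in> JK" for s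
    using assms(1) that unfolding hom_ext_def by blast
  have "f (Kjoin p q) = inf (f p) (f q)"
    using assms(1-3) JK_subset_Kminus unfolding hom_ext_def by blast
  then have "inf (x p) (x q) = f (Kjoin p q)"
    using agree assms(2,3) by simp
  also have "\<dots> \<le> f r"
    using assms JK_subset_Kminus by (blast intro: hom_ext_antitone)
  finally show ?thesis
    using agree assms(4) by simp
qed

lemma hom_ext_imp_inA:
  assumes "hom_ext x f" "finite (x ` JK)"
  shows "inA x"
  unfolding inA_def
proof (intro conjI ballI impI)
  fix p q assume "p \<in> JK" "q \<in> JK" "p \<subseteq> q"
  with assms(1) show "x q \<le> x p"
    using hom_ext_antitone[of x f p q] JK_subset_Kminus unfolding hom_ext_def by auto
qed fact

lemma hom_ext_imp_Astar_ineqs: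
  assumes "hom_ext x f"
  shows "Astar_ineqs x"
proof -
  have "inf (x (Aset m)) (x (Bset n)) \<le> x Cset" for m n
    using hom_ext_inf_le[OF assms in_JK(2,3,1)] by (simp add: Kjoin_Aset_Bset min_def)
  moreover have "inf (x (Bset n)) (x Cset) \<le> x (Aset (Suc n))" for n
    using hom_ext_inf_le[OF assms in_JK(3,1,2)] by (simp add: Kjoin_commute Kjoin_Cset_Bset)
  moreover have "inf (x (Aset n)) (x Cset) \<le> x (Bset (Suc n))" for n
    using hom_ext_inf_le[OF assms in_JK(2,1,3)] by (simp add: Kjoin_commute Kjoin_Cset_Aset)
  ultimately show ?thesis
    unfolding Astar_ineqs_def by blast
qed

lemma hom_ext_eq_Kext:
  assumes "hom_ext x f" "p \<in> Kminus"
  shows "f p = Kext x p"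
proof -
  have agree: "f s = x s" if "s \<in> JK" for s
    using assms(1) that unfolding hom_ext_def by blast
  from assms(2) show ?thesis
  proof (cases rule: Kminus_cases)
    case (CAB m n)
    then have "f p = f (Kjoin (Aset m) (Bset n))"
      by (simp add: Kjoin_Aset_Bset min_absorb1 min_absorb2)
    also have "\<dots> = inf (x (Aset m)) (x (Bset n))"
      using assms(1) agree unfolding hom_ext_def by simp
    finally show ?thesis
      using CAB by simp
  qed (simp_all add: agree)
qed

theorem lemma5p7:
  fixes h :: nat and x :: "pt set \<Rightarrow> 'a::bounded_lattice_bot"
  assumes "0 < h"
    and "h_modular h TYPE('a)"
    and "finite (x ` JK)"
  shows "(inAstar x \<longleftrightarrow> (\<exists>f. hom_ext x f))
    \<and> (\<forall>f g. hom_ext x f \<and> hom_ext x g \<longrightarrow> (\<forall>p\<in>Kminus. f p = g p))"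
proof (intro conjI allI impI ballI iffI)
  assume "inAstar x"
  then have "hom_ext x (Kext x)"
    unfolding inAstar_iff inA_iff using hom_ext_Kext by blast
  then show "\<exists>f. hom_ext x f" by blast
next
  assume "\<exists>f. hom_ext x f"
  then show "inAstar x"
    unfolding inAstar_iff using assms(3) hom_ext_imp_inA hom_ext_imp_Astar_ineqs by blast
next
  fix f g p assume "hom_ext x f \<and> hom_ext x g" "p \<in> Kminus"
  then show "f p = g p"
    using hom_ext_eq_Kext by metis
qed

end
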